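(* Let $\mathcal G=(V_{\min},V_{\max},E,w,\lambda)$ be a discounted payoff game, not all of whose joint strategies are co-optimal, with contraction $\lambda^*$ and gap $\gamma$, and let $\mathcal G'=(V_{\min},V_{\max},E,w',\lambda)$ differ from $\mathcal G$ only in the edge weights, such that $|w_e-w'_e|\le\frac{1-\lambda^*}{3}\gamma$ for all $e\in E$. Then every joint strategy that is co-optimal for $\mathcal G'$ is also co-optimal for $\mathcal G$.
   Context: A discounted payoff game is a tuple $\mathcal G=(V_{\min},V_{\max},E,w,\lambda)$ with $V=V_{\min}\cup V_{\max}$ finite (disjoint union of Min and Max vertices), $E\subseteq V\times V$ with every vertex having an outgoing edge, $w:E\to\mathbb R$, $\lambda:E\to[0,1)$. The outcome of a play $e_0e_1\ldots$ is $\sum_{i\ge0}w_{e_i}\prod_{j<i}\lambda_{e_j}$. A joint strategy is a map $\sigma:V\to V$ with $(v,\sigma(v))\in E$; $\mathrm{val}(\sigma)(v)$ is the outcome of the play from $v$ following $\sigma$; the game value is $\mathrm{val}(\mathcal G)(v)=\sup_{\sigma_{\max}}\inf_{\sigma_{\min}}$ of the outcome from $v$ over positional strategies; $\sigma$ is co-optimal iff $\mathrm{val}(\sigma)=\mathrm{val}(\mathcal G)$. $\mathsf{offset}(x,(v,v'))=x(v)-(w_{(v,v')}+\lambda_{(v,v')}x(v'))$ if $v\in V_{\max}$, and $(w_{(v,v')}+\lambda_{(v,v')}x(v'))-x(v)$ otherwise. The contraction is $\lambda^*=\max\{\lambda_e\mid e\in E\}$. For a joint strategy $\sigma$ that is not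 co-optimal, $\gamma_\sigma=-\min\{\mathsf{offset}(\mathrm{val}(\sigma),e)\mid e\in E\}$ (which is $>0$); the gap $\gamma$ of $\mathcal G$ is the minimum of $\gamma_\sigma$ over all non-co-optimal joint strategies $\sigma$. *)

theory Defs
  imports Complex_Main
begin

text \<open>A discounted payoff game over a finite vertex type 'v: Max vertices are the set Vmax,
  Min vertices are its complement; E is the edge relation, w the weights, lam the discounts.\<close>

definition discounted_game :: "'v::finite set \<Rightarrow> ('v \<times> 'v) set \<Rightarrow> ('v \<times> 'v \<Rightarrow> real) \<Rightarrow> bool" where
  "discounted_game Vmax E lam \<longleftrightarrow> (\<forall>v. \<exists>v'. (v, v') \<in> E) \<and> (\<forall>e\<in>E. 0 \<le> lam e \<and> lam e < 1)"

definition joint_strategy :: "('v \<times> 'v) set \<Rightarrow> ('v \<Rightarrow> 'v) \<Rightarrow> bool" where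
  "joint_strategy E \<sigma> \<longleftrightarrow> (\<forall>v. (v, \<sigma> v) \<in> E)"

definition strategy_on :: "('v \<times> 'v) set \<Rightarrow> 'v set \<Rightarrow> ('v \<Rightarrow> 'v) \<Rightarrow> bool" where
  "strategy_on E S s \<longleftrightarrow> (\<forall>u\<in>S. (u, s u) \<in> E)"

definition combine :: "'v set \<Rightarrow> ('v \<Rightarrow> 'v) \<Rightarrow> ('v \<Rightarrow> 'v) \<Rightarrow> 'v \<Rightarrow> 'v" where
  "combine Vmax smax smin = (\<lambda>u. if u \<in> Vmax then smax u else smin u)"

definition play :: "('v \<Rightarrow> 'v) \<Rightarrow> 'v \<Rightarrow> nat \<Rightarrow> 'v" where
  "play \<sigma> v i = (\<sigma> ^^ i) v"

definition val_strat :: "('v \<times> 'v \<Rightarrow> real) \<Rightarrow> ('v \<times> 'v \<Rightarrow> real) \<Rightarrow> ('v \<Rightarrow> 'v) \<Rightarrow> 'v \<Rightarrow> real" where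
  "val_strat w lam \<sigma> v =
     (\<Sum>i. w (play \<sigma> v i, play \<sigma> v (Suc i)) * (\<Prod>j<i. lam (play \<sigma> v j, play \<sigma> v (Suc j))))"

definition game_val :: "'v set \<Rightarrow> ('v \<times> 'v) set \<Rightarrow> ('v \<times> 'v \<Rightarrow> real) \<Rightarrow> ('v \<times> 'v \<Rightarrow> real) \<Rightarrow> 'v \<Rightarrow> real" where
  "game_val Vmax E w lam v =
     (SUP smax\<in>{s. strategy_on E Vmax s}. INF smin\<in>{s. strategy_on E (- Vmax) s}.
        val_strat w lam (combine Vmax smax smin) v)"

definition co_optimal :: "'v set \<Rightarrow> ('v \<times> 'v) set \<Rightarrow> ('v \<times> 'v \<Rightarrow> real) \<Rightarrow> ('v \<times> 'v \<Rightarrow> real) \<Rightarrow> ('v \<Rightarrow> 'v) \<Rightarrow> bool" where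
  "co_optimal Vmax E w lam \<sigma> \<longleftrightarrow> joint_strategy E \<sigma> \<and> val_strat w lam \<sigma> = game_val Vmax E w lam"

fun offset :: "'v set \<Rightarrow> ('v \<times> 'v \<Rightarrow> real) \<Rightarrow> ('v \<times> 'v \<Rightarrow> real) \<Rightarrow> ('v \<Rightarrow> real) \<Rightarrow> 'v \<times> 'v \<Rightarrow> real" where
  "offset Vmax w lam x (v, v') =
     (if v \<in> Vmax then x v - (w (v, v') + lam (v, v') * x v')
      else (w (v, v') + lam (v, v') * x v') - x v)"

definition contraction :: "('v \<times> 'v) set \<Rightarrow> ('v \<times> 'v \<Rightarrow> real) \<Rightarrow> real" where
  "contraction E lam = Max (lam ` E)"

definition gamma_strat :: "'v set \<Rightarrow> ('v \<times> 'v) set \<Rightarrow> ('v \<times> 'v \<Rightarrow> real) \<Rightarrow> ('v \<times> 'v \<Rightarrow> real) \<Rightarrow> ('v \<Rightarrow> 'v) \<Rightarrow> real" where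
  "gamma_strat Vmax E w lam \<sigma> = - Min (offset Vmax w lam (val_strat w lam \<sigma>) ` E)"

definition gap :: "'v set \<Rightarrow> ('v \<times> 'v) set \<Rightarrow> ('v \<times> 'v \<Rightarrow> real) \<Rightarrow> ('v \<times> 'v \<Rightarrow> real) \<Rightarrow> real" where
  "gap Vmax E w lam = Min (gamma_strat Vmax E w lam ` {\<sigma>. joint_strategy E \<sigma> \<and> \<not> co_optimal Vmax E w lam \<sigma>})"

end

theory Submission
  imports Defs
begin

text \<open>A joint strategy is co-optimal iff its value has no negative offset: such a value is a
  lower bound for what Max guarantees by playing it (Min may deviate) and an upper bound for
  what Min guarantees (Max may deviate), and positional determinacy provides a strategy
  whose value has this property. In particular the gap \<gamma> is positive. Perturbing the
  weights by at most \<delta> moves the value of a fixed strategy by at most \<delta> / (1 - \<lambda>*),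
  hence every offset by at most \<delta> + (1 + \<lambda>*) \<delta> / (1 - \<lambda>*) = 2 \<delta> / (1 - \<lambda>*).
  For \<delta> = (1 - \<lambda>*) \<gamma> / 3 a strategy that is co-optimal for w' therefore has all offsets
  \<ge> -2\<gamma>/3 for w, whereas a strategy that is not co-optimal for w has an offset \<le> -\<gamma>.\<close>

lemma play_0: "play \<tau> u 0 = u"
  by (simp add: play_def)

lemma play_Suc: "play \<tau> u (Suc i) = play \<tau> (\<tau> u) i"
  by (simp add: play_def funpow_swap1)

definition discounted_weight ::
  "('v \<times> 'v \<Rightarrow> real) \<Rightarrow> ('v \<times> 'v \<Rightarrow> real) \<Rightarrow> ('v \<Rightarrow> 'v) \<Rightarrow> 'v \<Rightarrow> nat \<Rightarrow> real" where
  "discounted_weight w lam \<tau> u i =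
     w (play \<tau> u i, play \<tau> u (Suc i)) * (\<Prod>j<i. lam (play \<tau> u j, play \<tau> u (Suc j)))"

lemma val_strat_eq_suminf: "val_strat w lam \<tau> u = (\<Sum>i. discounted_weight w lam \<tau> u i)"
  by (simp add: val_strat_def discounted_weight_def)

lemma discounted_weight_0: "discounted_weight w lam \<tau> u 0 = w (u, \<tau> u)"
  by (simp add: discounted_weight_def play_0 play_Suc)

lemma discounted_weight_Suc:
  "discounted_weight w lam \<tau> u (Suc i) = lam (u, \<tau> u) * discounted_weight w lam \<tau> (\<tau> u) i"
  unfolding discounted_weight_def prod.lessThan_Suc_shift by (simp add: play_0 play_Suc)

lemma discounted_weight_diff:
  "discounted_weight (\<lambda>e. w e - w' e) lam \<tau> u i =
     discounted_weight w lam \<tau> u i - discounted_weight w' lam \<tau> u i"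
  by (simp add: discounted_weight_def left_diff_distrib)

locale discounted_payoff_game =
  fixes Vmax :: "'v::finite set" and E :: "('v \<times> 'v) set" and lam :: "'v \<times> 'v \<Rightarrow> real"
  assumes discounted_game: "discounted_game Vmax E lam"
begin

lemma ex_edge: "\<exists>v'. (v, v') \<in> E"
  using discounted_game by (simp add: discounted_game_def)

lemma lam_nonneg: "e \<in> E \<Longrightarrow> 0 \<le> lam e"
  using discounted_game by (simp add: discounted_game_def)

lemma lam_less_1: "e \<in> E \<Longrightarrow> lam e < 1"
  using discounted_game by (simp add: discounted_game_def)

lemma lam_le_contraction: "e \<in> E \<Longrightarrow> lam e \<le> contraction E lam"
  by (simp add: contraction_def)

lemma edges_nonempty: "E \<noteq> {}"
  using ex_edge by blast

lemma contraction_nonneg: "0 \<le> contraction E lam"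
  using edges_nonempty lam_nonneg lam_le_contraction by (meson ex_in_conv order_trans)

lemma contraction_less_1: "contraction E lam < 1"
  using edges_nonempty lam_less_1 by (simp add: contraction_def)

lemma abs_discounted_weight_le:
  assumes \<tau>: "joint_strategy E \<tau>" and w: "\<forall>e\<in>E. \<bar>w e\<bar> \<le> \<delta>"
  shows "\<bar>discounted_weight w lam \<tau> u i\<bar> \<le> \<delta> * contraction E lam ^ i"
proof (induction i arbitrary: u)
  case 0
  show ?case using \<tau> w by (simp add: discounted_weight_0 joint_strategy_def)
next
  case (Suc i)
  have e: "(u, \<tau> u) \<in> E" using \<tau> by (simp add: joint_strategy_def)
  have "\<bar>discounted_weight w lam \<tau> u (Suc i)\<bar> = lam (u, \<tau> u) * \<bar>discounted_weight w lam \<tau> (\<tau> u) i\<bar>"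
    using lam_nonneg[OF e] by (simp add: discounted_weight_Suc abs_mult)
  also have "\<dots> \<le> contraction E lam * (\<delta> * contraction E lam ^ i)"
    using Suc.IH lam_le_contraction[OF e] lam_nonneg[OF e] contraction_nonneg
    by (meson abs_ge_zero mult_mono)
  finally show ?case by (simp add: algebra_simps)
qed

lemma summable_discounted_weight:
  assumes "joint_strategy E \<tau>"
  shows "summable (discounted_weight w lam \<tau> u)"
proof (rule summable_comparison_test)
  define \<delta> where "\<delta> = Max ((\<lambda>e. \<bar>w e\<bar>) ` E)"
  have "\<forall>e\<in>E. \<bar>w e\<bar> \<le> \<delta>" by (simp add: \<delta>_def)
  then show "\<exists>N. \<forall>n\<ge>N. norm (discounted_weight w lam \<tau> u n) \<le> \<delta> * contraction E lam ^ n"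
    using abs_discounted_weight_le[OF assms] by auto
  show "summable (\<lambda>n. \<delta> * contraction E lam ^ n)"
    using contraction_nonneg contraction_less_1 by (intro summable_mult summable_geometric) simp
qed

lemma val_strat_bellman:
  assumes "joint_strategy E \<tau>"
  shows "val_strat w lam \<tau> u = w (u, \<tau> u) + lam (u, \<tau> u) * val_strat w lam \<tau> (\<tau> u)"
  using suminf_split_head[OF summable_discounted_weight[OF assms, of w u]]
  by (simp add: val_strat_eq_suminf discounted_weight_0 discounted_weight_Suc
      suminf_mult[OF summable_discounted_weight[OF assms]])

lemma abs_val_strat_le:
  assumes \<tau>: "joint_strategy E \<tau>" and w: "\<forall>e\<in>E. \<bar>w e\<bar> \<le> \<delta>"
  shows "\<bar>val_strat w lam \<tau> u\<bar> \<le> \<delta> / (1 - contraction E lam)"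
proof -
  let ?L = "contraction E lam"
  have bound: "\<bar>discounted_weight w lam \<tau> u i\<bar> \<le> \<delta> * ?L ^ i" for i
    by (rule abs_discounted_weight_le[OF \<tau> w])
  have geom: "summable (\<lambda>i. \<delta> * ?L ^ i)" "(\<Sum>i. \<delta> * ?L ^ i) = \<delta> / (1 - ?L)"
    using contraction_nonneg contraction_less_1
    by (simp_all add: summable_mult summable_geometric suminf_mult suminf_geometric)
  have "(\<Sum>i. - (\<delta> * ?L ^ i)) \<le> (\<Sum>i. discounted_weight w lam \<tau> u i)"
  proof (rule suminf_le)
    show "- (\<delta> * ?L ^ i) \<le> discounted_weight w lam \<tau> u i" for i
      using bound[of i] by linarith
  qed (use geom(1) summable_discounted_weight[OF \<tau>] in \<open>simp_all add: summable_minus\<close>)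
  then have "- (\<delta> / (1 - ?L)) \<le> val_strat w lam \<tau> u"
    using geom by (simp add: val_strat_eq_suminf suminf_minus)
  moreover have "(\<Sum>i. discounted_weight w lam \<tau> u i) \<le> (\<Sum>i. \<delta> * ?L ^ i)"
  proof (rule suminf_le)
    show "discounted_weight w lam \<tau> u i \<le> \<delta> * ?L ^ i" for i
      using bound[of i] by linarith
  qed (use geom(1) summable_discounted_weight[OF \<tau>] in simp_all)
  ultimately show ?thesis
    using geom(2) by (simp add: val_strat_eq_suminf abs_le_iff)
qed

lemma val_strat_diff:
  assumes "joint_strategy E \<tau>"
  shows "val_strat (\<lambda>e. w e - w' e) lam \<tau> u = val_strat w lam \<tau> u - val_strat w' lam \<tau> u"
  by (simp add: val_strat_eq_suminf discounted_weight_diff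
      suminf_diff[OF summable_discounted_weight[OF assms] summable_discounted_weight[OF assms]])

lemma nonneg_if_ge_discounted_successor:
  assumes \<tau>: "joint_strategy E \<tau>" and ge: "\<And>u. lam (u, \<tau> u) * d (\<tau> u) \<le> d u"
  shows "0 \<le> d u"
proof -
  obtain u\<^sub>0 where min: "\<And>u. d u\<^sub>0 \<le> d u"
    using ex_is_arg_min_if_finite[of UNIV d] by (auto simp: is_arg_min_linorder)
  define l where "l = lam (u\<^sub>0, \<tau> u\<^sub>0)"
  have l: "0 \<le> l" "l < 1"
    using \<tau> lam_nonneg lam_less_1 by (simp_all add: l_def joint_strategy_def)
  have "l * d u\<^sub>0 \<le> d u\<^sub>0"
    using ge[of u\<^sub>0] min[of "\<tau> u\<^sub>0"] l(1) unfolding l_def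
    by (meson mult_left_mono order_trans)
  then have "0 \<le> (1 - l) * d u\<^sub>0"
    by (simp add: algebra_simps)
  then have "0 \<le> d u\<^sub>0"
    using l(2) by (simp add: zero_le_mult_iff)
  then show ?thesis using min order_trans by blast
qed

lemma le_val_strat:
  assumes \<tau>: "joint_strategy E \<tau>" and le: "\<And>u. y u \<le> w (u, \<tau> u) + lam (u, \<tau> u) * y (\<tau> u)"
  shows "y u \<le> val_strat w lam \<tau> u"
proof -
  have "0 \<le> val_strat w lam \<tau> u - y u"
  proof (rule nonneg_if_ge_discounted_successor[OF \<tau>])
    fix v
    show "lam (v, \<tau> v) * (val_strat w lam \<tau> (\<tau> v) - y (\<tau> v)) \<le> val_strat w lam \<tau> v - y v"
      using le[of v] val_strat_bellman[OF \<tau>, of w v] unfolding right_diff_distrib by linarith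
  qed
  then show ?thesis by simp
qed

lemma val_strat_le:
  assumes \<tau>: "joint_strategy E \<tau>" and ge: "\<And>u. w (u, \<tau> u) + lam (u, \<tau> u) * y (\<tau> u) \<le> y u"
  shows "val_strat w lam \<tau> u \<le> y u"
proof -
  have "0 \<le> y u - val_strat w lam \<tau> u"
  proof (rule nonneg_if_ge_discounted_successor[OF \<tau>])
    fix v
    show "lam (v, \<tau> v) * (y (\<tau> v) - val_strat w lam \<tau> (\<tau> v)) \<le> y v - val_strat w lam \<tau> v"
      using ge[of v] val_strat_bellman[OF \<tau>, of w v] unfolding right_diff_distrib by linarith
  qed
  then show ?thesis by simp
qed

text \<open>The total value is the potential of the determinacy argument: redirecting one edge
  against a negative offset changes it strictly in favour of the player who redirects.\<close>

definition val_sum :: "('v \<times> 'v \<Rightarrow> real) \<Rightarrow> ('v \<Rightarrow> 'v) \<Rightarrow> real" where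
  "val_sum w \<tau> = (\<Sum>u\<in>UNIV. val_strat w lam \<tau> u)"

lemma sum_less_val_sum:
  assumes \<tau>: "joint_strategy E \<tau>"
    and le: "\<And>v. y v \<le> w (v, \<tau> v) + lam (v, \<tau> v) * y (\<tau> v)"
    and less: "y u < w (u, \<tau> u) + lam (u, \<tau> u) * y (\<tau> u)"
  shows "(\<Sum>v\<in>UNIV. y v) < val_sum w \<tau>"
  unfolding val_sum_def
proof (rule sum_strict_mono_ex1)
  have "lam (u, \<tau> u) * y (\<tau> u) \<le> lam (u, \<tau> u) * val_strat w lam \<tau> (\<tau> u)"
    using \<tau> lam_nonneg le_val_strat[OF \<tau> le] by (simp add: joint_strategy_def mult_left_mono)
  then have "y u < val_strat w lam \<tau> u"
    using less val_strat_bellman[OF \<tau>, of w u] by linarith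
  then show "\<exists>v\<in>UNIV. y v < val_strat w lam \<tau> v" by blast
qed (use le_val_strat[OF \<tau> le] in auto)

lemma val_sum_less_sum:
  assumes \<tau>: "joint_strategy E \<tau>"
    and ge: "\<And>v. w (v, \<tau> v) + lam (v, \<tau> v) * y (\<tau> v) \<le> y v"
    and less: "w (u, \<tau> u) + lam (u, \<tau> u) * y (\<tau> u) < y u"
  shows "val_sum w \<tau> < (\<Sum>v\<in>UNIV. y v)"
  unfolding val_sum_def
proof (rule sum_strict_mono_ex1)
  have "lam (u, \<tau> u) * val_strat w lam \<tau> (\<tau> u) \<le> lam (u, \<tau> u) * y (\<tau> u)"
    using \<tau> lam_nonneg val_strat_le[OF \<tau> ge] by (simp add: joint_strategy_def mult_left_mono)
  then have "val_strat w lam \<tau> u < y u"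
    using less val_strat_bellman[OF \<tau>, of w u] by linarith
  then show "\<exists>v\<in>UNIV. val_strat w lam \<tau> v < y v" by blast
qed (use val_strat_le[OF \<tau> ge] in auto)

abbreviation max_strategies :: "('v \<Rightarrow> 'v) set" where
  "max_strategies \<equiv> {s. strategy_on E Vmax s}"

abbreviation min_strategies :: "('v \<Rightarrow> 'v) set" where
  "min_strategies \<equiv> {t. strategy_on E (- Vmax) t}"

lemma joint_strategy_combine:
  "strategy_on E Vmax s \<Longrightarrow> strategy_on E (- Vmax) t \<Longrightarrow> joint_strategy E (combine Vmax s t)"
  by (simp add: strategy_on_def joint_strategy_def combine_def)

lemma strategy_on_if_joint_strategy: "joint_strategy E \<sigma> \<Longrightarrow> strategy_on E S \<sigma>"
  by (simp add: strategy_on_def joint_strategy_def)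

lemma ex_strategy_on: "\<exists>s. strategy_on E S s"
  using ex_edge by (metis strategy_on_def)

lemma min_offset_nonneg_if_min_response:
  assumes \<sigma>: "joint_strategy E \<sigma>"
    and min_response: "\<And>t. strategy_on E (- Vmax) t \<Longrightarrow> val_sum w \<sigma> \<le> val_sum w (combine Vmax \<sigma> t)"
    and u: "u \<notin> Vmax" and e: "(u, u') \<in> E"
  shows "0 \<le> offset Vmax w lam (val_strat w lam \<sigma>) (u, u')"
proof (rule ccontr)
  define y where "y = val_strat w lam \<sigma>"
  define t where "t = \<sigma>(u := u')"
  let ?\<tau> = "combine Vmax \<sigma> t"
  assume "\<not> ?thesis"
  then have less: "w (u, u') + lam (u, u') * y u' < y u"
    using u by (simp add: y_def)
  have t: "strategy_on E (- Vmax) t"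
    using \<sigma> e by (simp add: t_def strategy_on_def joint_strategy_def)
  have "val_sum w ?\<tau> < (\<Sum>v\<in>UNIV. y v)"
  proof (rule val_sum_less_sum[OF joint_strategy_combine[OF strategy_on_if_joint_strategy[OF \<sigma>] t]])
    show "w (u, ?\<tau> u) + lam (u, ?\<tau> u) * y (?\<tau> u) < y u"
      using less u by (simp add: combine_def t_def)
    show "w (v, ?\<tau> v) + lam (v, ?\<tau> v) * y (?\<tau> v) \<le> y v" for v
      using less val_strat_bellman[OF \<sigma>, of w v]
      by (cases "v = u") (auto simp: y_def combine_def t_def)
  qed
  then show False
    using min_response[OF t] by (simp add: val_sum_def y_def)
qed

lemma max_offset_nonneg_if_max_response:
  assumes \<sigma>: "joint_strategy E \<sigma>"
    and min_offsets: "\<And>v v'. v \<notin> Vmax \<Longrightarrow> (v, v') \<in> E \<Longrightarrow>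
      0 \<le> offset Vmax w lam (val_strat w lam \<sigma>) (v, v')"
    and max_response: "\<And>s. strategy_on E Vmax s \<Longrightarrow>
      \<exists>t. strategy_on E (- Vmax) t \<and> val_sum w (combine Vmax s t) \<le> val_sum w \<sigma>"
    and u: "u \<in> Vmax" and e: "(u, u') \<in> E"
  shows "0 \<le> offset Vmax w lam (val_strat w lam \<sigma>) (u, u')"
proof (rule ccontr)
  define y where "y = val_strat w lam \<sigma>"
  define s where "s = \<sigma>(u := u')"
  have s: "strategy_on E Vmax s"
    using \<sigma> e by (simp add: s_def strategy_on_def joint_strategy_def)
  then obtain t where t: "strategy_on E (- Vmax) t"
    and le: "val_sum w (combine Vmax s t) \<le> val_sum w \<sigma>"
    using max_response by blast
  let ?\<tau> = "combine Vmax s t"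
  have \<tau>: "joint_strategy E ?\<tau>"
    by (rule joint_strategy_combine[OF s t])
  assume "\<not> ?thesis"
  then have less: "y u < w (u, u') + lam (u, u') * y u'"
    using u by (simp add: y_def)
  have "(\<Sum>v\<in>UNIV. y v) < val_sum w ?\<tau>"
  proof (rule sum_less_val_sum[OF \<tau>])
    show "y u < w (u, ?\<tau> u) + lam (u, ?\<tau> u) * y (?\<tau> u)"
      using less u by (simp add: combine_def s_def)
    show "y v \<le> w (v, ?\<tau> v) + lam (v, ?\<tau> v) * y (?\<tau> v)" for v
    proof (cases "v \<in> Vmax")
      case True
      then show ?thesis
        using less val_strat_bellman[OF \<sigma>, of w v]
        by (cases "v = u") (auto simp: y_def combine_def s_def)
    next
      case False
      then show ?thesis
        using min_offsets[of v "?\<tau> v"] \<tau> by (simp add: y_def joint_strategy_def)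
    qed
  qed
  then show False
    using le by (simp add: val_sum_def y_def)
qed

lemma ex_joint_strategy_offsets_nonneg:
  "\<exists>\<sigma>. joint_strategy E \<sigma> \<and> (\<forall>e\<in>E. 0 \<le> offset Vmax w lam (val_strat w lam \<sigma>) e)"
proof -
  define r where
    "r s = arg_min_on (\<lambda>t. val_sum w (combine Vmax s t)) min_strategies" for s
  have min_nonempty: "min_strategies \<noteq> {}" and max_nonempty: "max_strategies \<noteq> {}"
    using ex_strategy_on by auto
  have r: "strategy_on E (- Vmax) (r s)"
    "strategy_on E (- Vmax) t \<Longrightarrow> val_sum w (combine Vmax s (r s)) \<le> val_sum w (combine Vmax s t)"
    for s t
    using arg_min_if_finite(1)[OF _ min_nonempty]
      arg_min_least[OF _ min_nonempty, of _ "\<lambda>t. val_sum w (combine Vmax s t)"]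
    by (auto simp: r_def)
  obtain s where s: "strategy_on E Vmax s"
    and max_s: "\<And>s'. strategy_on E Vmax s' \<Longrightarrow>
      val_sum w (combine Vmax s' (r s')) \<le> val_sum w (combine Vmax s (r s))"
    using ex_is_arg_min_if_finite[OF _ max_nonempty, of "\<lambda>s. - val_sum w (combine Vmax s (r s))"]
    by (auto simp: is_arg_min_linorder)
  define \<sigma> where "\<sigma> = combine Vmax s (r s)"
  have \<sigma>: "joint_strategy E \<sigma>"
    using joint_strategy_combine[OF s r(1)] by (simp add: \<sigma>_def)
  have "combine Vmax \<sigma> t = combine Vmax s t" for t
    by (simp add: \<sigma>_def combine_def fun_eq_iff)
  then have min_offsets: "0 \<le> offset Vmax w lam (val_strat w lam \<sigma>) (v, v')"
    if "v \<notin> Vmax" "(v, v') \<in> E" for v v'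
    using min_offset_nonneg_if_min_response[OF \<sigma> _ that] r(2) by (simp add: \<sigma>_def)
  have "0 \<le> offset Vmax w lam (val_strat w lam \<sigma>) (u, u')"
    if "u \<in> Vmax" "(u, u') \<in> E" for u u'
  proof (rule max_offset_nonneg_if_max_response[OF \<sigma> min_offsets _ that])
    show "\<exists>t. strategy_on E (- Vmax) t \<and> val_sum w (combine Vmax s' t) \<le> val_sum w \<sigma>"
      if "strategy_on E Vmax s'" for s'
      using that r(1) max_s unfolding \<sigma>_def by blast
  qed
  then show ?thesis
    using \<sigma> min_offsets by (metis surj_pair)
qed

lemma game_val_eq_val_strat:
  assumes \<sigma>: "joint_strategy E \<sigma>"
    and nonneg: "\<forall>e\<in>E. 0 \<le> offset Vmax w lam (val_strat w lam \<sigma>) e"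
  shows "game_val Vmax E w lam = val_strat w lam \<sigma>"
proof
  fix v
  define x where "x = val_strat w lam \<sigma>"
  let ?f = "\<lambda>s t. val_strat w lam (combine Vmax s t) v"
  have edge: "(u, \<tau> u) \<in> E" if "joint_strategy E \<tau>" for \<tau> u
    using that by (simp add: joint_strategy_def)
  have against_min: "x v \<le> ?f \<sigma> t" if t: "strategy_on E (- Vmax) t" for t
  proof (rule le_val_strat)
    let ?\<tau> = "combine Vmax \<sigma> t"
    show \<tau>: "joint_strategy E ?\<tau>"
      by (rule joint_strategy_combine[OF strategy_on_if_joint_strategy[OF \<sigma>] t])
    show "x u \<le> w (u, ?\<tau> u) + lam (u, ?\<tau> u) * x (?\<tau> u)" for u
      using val_strat_bellman[OF \<sigma>, of w u] nonneg edge[OF \<tau>, of u]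
      by (cases "u \<in> Vmax") (force simp: x_def combine_def)+
  qed
  have against_max: "?f s \<sigma> \<le> x v" if s: "strategy_on E Vmax s" for s
  proof (rule val_strat_le)
    let ?\<tau> = "combine Vmax s \<sigma>"
    show \<tau>: "joint_strategy E ?\<tau>"
      by (rule joint_strategy_combine[OF s strategy_on_if_joint_strategy[OF \<sigma>]])
    show "w (u, ?\<tau> u) + lam (u, ?\<tau> u) * x (?\<tau> u) \<le> x u" for u
      using val_strat_bellman[OF \<sigma>, of w u] nonneg edge[OF \<tau>, of u]
      by (cases "u \<in> Vmax") (force simp: x_def combine_def)+
  qed
  have min_nonempty: "min_strategies \<noteq> {}" and max_nonempty: "max_strategies \<noteq> {}"
    using ex_strategy_on by auto
  have "x v \<le> (INF t\<in>min_strategies. ?f \<sigma> t)"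
    using against_min by (intro cINF_greatest[OF min_nonempty]) simp
  also have "\<dots> \<le> (SUP s\<in>max_strategies. INF t\<in>min_strategies. ?f s t)"
    using strategy_on_if_joint_strategy[OF \<sigma>] by (intro cSUP_upper bdd_above_finite) simp_all
  finally have lower: "x v \<le> game_val Vmax E w lam v"
    by (simp add: game_val_def)
  have "(INF t\<in>min_strategies. ?f s t) \<le> x v" if "strategy_on E Vmax s" for s
    using against_max[OF that] strategy_on_if_joint_strategy[OF \<sigma>]
    by (intro cINF_lower2[where x = \<sigma>] bdd_below_finite) simp_all
  then have upper: "game_val Vmax E w lam v \<le> x v"
    unfolding game_val_def by (intro cSUP_least[OF max_nonempty]) simp
  show "game_val Vmax E w lam v = val_strat w lam \<sigma> v"
    using lower upper by (simp add: x_def)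
qed

lemma co_optimal_iff_offsets_nonneg:
  assumes "joint_strategy E \<sigma>"
  shows "co_optimal Vmax E w lam \<sigma> \<longleftrightarrow> (\<forall>e\<in>E. 0 \<le> offset Vmax w lam (val_strat w lam \<sigma>) e)"
proof
  obtain \<sigma>\<^sub>0 where \<sigma>\<^sub>0: "joint_strategy E \<sigma>\<^sub>0"
    and nonneg: "\<forall>e\<in>E. 0 \<le> offset Vmax w lam (val_strat w lam \<sigma>\<^sub>0) e"
    using ex_joint_strategy_offsets_nonneg by blast
  assume "co_optimal Vmax E w lam \<sigma>"
  then have "val_strat w lam \<sigma> = val_strat w lam \<sigma>\<^sub>0"
    using game_val_eq_val_strat[OF \<sigma>\<^sub>0 nonneg] by (simp add: co_optimal_def)
  then show "\<forall>e\<in>E. 0 \<le> offset Vmax w lam (val_strat w lam \<sigma>) e"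
    using nonneg by simp
qed (use assms game_val_eq_val_strat in \<open>simp add: co_optimal_def\<close>)

lemma gamma_strat_pos:
  assumes "joint_strategy E \<sigma>" and "\<not> co_optimal Vmax E w lam \<sigma>"
  shows "0 < gamma_strat Vmax E w lam \<sigma>"
proof -
  obtain e where e: "e \<in> E" "offset Vmax w lam (val_strat w lam \<sigma>) e < 0"
    using assms co_optimal_iff_offsets_nonneg by (auto simp: not_le)
  have "Min (offset Vmax w lam (val_strat w lam \<sigma>) ` E) \<le> offset Vmax w lam (val_strat w lam \<sigma>) e"
    using e(1) by simp
  then show ?thesis
    using e(2) by (simp add: gamma_strat_def)
qed

lemma gap_pos:
  assumes "\<exists>\<sigma>. joint_strategy E \<sigma> \<and> \<not> co_optimal Vmax E w lam \<sigma>"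
  shows "0 < gap Vmax E w lam"
  using assms gamma_strat_pos by (simp add: gap_def Min_gr_iff)

lemma offset_ge_if_perturbed_offsets_nonneg:
  assumes \<sigma>: "joint_strategy E \<sigma>"
    and nonneg: "\<forall>e\<in>E. 0 \<le> offset Vmax w' lam (val_strat w' lam \<sigma>) e"
    and close: "\<forall>e\<in>E. \<bar>w e - w' e\<bar> \<le> \<delta>"
    and "e \<in> E"
  shows "- (2 * (\<delta> / (1 - contraction E lam))) \<le> offset Vmax w lam (val_strat w lam \<sigma>) e"
proof -
  obtain u u' where e_eq: "e = (u, u')"
    by (cases e)
  with \<open>e \<in> E\<close> have e: "(u, u') \<in> E"
    by simp
  let ?L = "contraction E lam"
  define x where "x = val_strat w lam \<sigma>"
  define x' where "x' = val_strat w' lam \<sigma>"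
  define c where "c = \<delta> / (1 - ?L)"
  have dx: "\<bar>x v - x' v\<bar> \<le> c" for v
    using abs_val_strat_le[OF \<sigma> close, of v] val_strat_diff[OF \<sigma>, of w w' v]
    by (simp add: x_def x'_def c_def)
  have "lam (u, u') * \<bar>x u' - x' u'\<bar> \<le> ?L * c"
    using dx[of u'] lam_nonneg[OF e] lam_le_contraction[OF e] contraction_nonneg
    by (meson abs_ge_zero mult_mono)
  then have "\<bar>lam (u, u') * x u' - lam (u, u') * x' u'\<bar> \<le> ?L * c"
    using lam_nonneg[OF e] by (simp add: abs_mult right_diff_distrib[symmetric])
  moreover have "c = \<delta> + ?L * c"
    using contraction_less_1 by (simp add: c_def field_simps)
  moreover have "0 \<le> offset Vmax w' lam x' (u, u')" and "\<bar>w (u, u') - w' (u, u')\<bar> \<le> \<delta>"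
    using nonneg close e unfolding x'_def by blast+
  ultimately show ?thesis
    using dx[of u] unfolding e_eq x_def[symmetric] c_def[symmetric]
    by (cases "u \<in> Vmax") (auto simp: abs_le_iff)
qed

end

theorem lemma4p5:
  fixes Vmax :: "'v::finite set" and E :: "('v \<times> 'v) set"
    and w w' lam :: "'v \<times> 'v \<Rightarrow> real"
  assumes game: "discounted_game Vmax E lam"
    and not_all: "\<exists>\<sigma>. joint_strategy E \<sigma> \<and> \<not> co_optimal Vmax E w lam \<sigma>"
    and close: "\<forall>e\<in>E. \<bar>w e - w' e\<bar> \<le> (1 - contraction E lam) / 3 * gap Vmax E w lam"
  shows "\<forall>\<sigma>. co_optimal Vmax E w' lam \<sigma> \<longrightarrow> co_optimal Vmax E w lam \<sigma>"
proof (intro allI impI)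
  interpret discounted_payoff_game Vmax E lam
    by (rule discounted_payoff_game.intro[OF game])
  let ?\<gamma> = "gap Vmax E w lam"
  fix \<sigma>
  assume co': "co_optimal Vmax E w' lam \<sigma>"
  then have \<sigma>: "joint_strategy E \<sigma>"
    by (simp add: co_optimal_def)
  have "(1 - contraction E lam) / 3 * ?\<gamma> / (1 - contraction E lam) = ?\<gamma> / 3"
    using contraction_less_1 by (simp add: field_simps)
  then have "- (2 / 3 * ?\<gamma>) \<le> offset Vmax w lam (val_strat w lam \<sigma>) e" if "e \<in> E" for e
    using offset_ge_if_perturbed_offsets_nonneg[OF \<sigma> _ close that] co'
      co_optimal_iff_offsets_nonneg[OF \<sigma>]
    by simp
  then have "- (2 / 3 * ?\<gamma>) \<le> Min (offset Vmax w lam (val_strat w lam \<sigma>) ` E)"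
    using edges_nonempty by (subst Min_ge_iff) auto
  then have "\<not> ?\<gamma> \<le> gamma_strat Vmax E w lam \<sigma>"
    using gap_pos[OF not_all] unfolding gamma_strat_def by linarith
  then show "co_optimal Vmax E w lam \<sigma>"
    using \<sigma> by (auto simp: gap_def intro: Min_le)
qed

end
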